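(* Under the hypotheses of the FTRL regret setting in the context (non-negative losses $\ell_k\in\mathbb R^A$; $0<\alpha_1\le1$, $\eta_1=\eta_2(1-\alpha_1)$; for $k\ge2$, $0<\alpha_k<1$ and $0<\eta_{k+1}(1-\alpha_k)\le\eta_k$), define for $k\ge1$ the auxiliary distribution $\pi_{k+1}^-(a)=\exp(-\widehat\eta_kL_k(a))/\sum_{a'}\exp(-\widehat\eta_kL_k(a'))$. Then for every $n\ge1$, $$R_n\le\sum_{k=1}^n\alpha_k^n\langle\pi_k-\pi_{k+1}^-,\ell_k\rangle+\frac{\log A}{\eta_{n+1}}.$$
   Context: Online weighted linear optimization over $\mathcal A=\{1,\dots,A\}$: given $\{\alpha_k\}\subset(0,1]$, let $\alpha_i^k=\alpha_i\prod_{j=i+1}^k(1-\alpha_j)$ for $i<k$, $\alpha_k^k=\alpha_k$. Define $L_0=0$ and $L_k=(1-\alpha_k)L_{k-1}+\alpha_k\ell_k=\sum_{i=1}^k\alpha_i^k\ell_i$. FTRL iterates: $\pi_k(a)=\exp(-\eta_kL_{k-1}(a))/\sum_{a'}\exp(-\eta_kL_{k-1}(a'))$, $k\ge1$. $\widehat\eta_1=\eta_2$ and $\widehat\eta_k=\eta_k/(1-\alpha_k)$ for $k>1$. Regret: $R_n=\max_{a}\{\sum_{k=1}^n\alpha_k^n\langle\pi_k,\ell_k\rangle-\sum_{k=1}^n\alpha_k^n\ell_k(a)\}$. *)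

theory Defs
  imports Complex_Main
begin

text \<open>Actions are 1..A; losses ell k a (k >= 1, a in 1..A); step sizes alpha k, learning rates eta k.\<close>

definition wgt :: "(nat \<Rightarrow> real) \<Rightarrow> nat \<Rightarrow> nat \<Rightarrow> real" where
  "wgt alpha i k = alpha i * (\<Prod>j\<in>{i+1..k}. (1 - alpha j))"

definition cumL :: "(nat \<Rightarrow> real) \<Rightarrow> (nat \<Rightarrow> nat \<Rightarrow> real) \<Rightarrow> nat \<Rightarrow> nat \<Rightarrow> real" where
  "cumL alpha ell k a = (\<Sum>i=1..k. wgt alpha i k * ell i a)"

definition softmax :: "nat \<Rightarrow> real \<Rightarrow> (nat \<Rightarrow> real) \<Rightarrow> nat \<Rightarrow> real" where
  "softmax A eta L a = exp (- eta * L a) / (\<Sum>a'=1..A. exp (- eta * L a'))"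

definition ftrl :: "nat \<Rightarrow> (nat \<Rightarrow> real) \<Rightarrow> (nat \<Rightarrow> real) \<Rightarrow> (nat \<Rightarrow> nat \<Rightarrow> real) \<Rightarrow> nat \<Rightarrow> nat \<Rightarrow> real" where
  "ftrl A alpha eta ell k = softmax A (eta k) (cumL alpha ell (k - 1))"

definition etahat :: "(nat \<Rightarrow> real) \<Rightarrow> (nat \<Rightarrow> real) \<Rightarrow> nat \<Rightarrow> real" where
  "etahat alpha eta k = (if k = 1 then eta 2 else eta k / (1 - alpha k))"

text \<open>Auxiliary distribution: pim k = pi_{k+1}^- for k >= 1.\<close>
definition pim :: "nat \<Rightarrow> (nat \<Rightarrow> real) \<Rightarrow> (nat \<Rightarrow> real) \<Rightarrow> (nat \<Rightarrow> nat \<Rightarrow> real) \<Rightarrow> nat \<Rightarrow> nat \<Rightarrow> real" where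
  "pim A alpha eta ell k = softmax A (etahat alpha eta k) (cumL alpha ell k)"

definition regret :: "nat \<Rightarrow> (nat \<Rightarrow> real) \<Rightarrow> (nat \<Rightarrow> real) \<Rightarrow> (nat \<Rightarrow> nat \<Rightarrow> real) \<Rightarrow> nat \<Rightarrow> real" where
  "regret A alpha eta ell n =
     Max ((\<lambda>a. (\<Sum>k=1..n. wgt alpha k n * (\<Sum>b=1..A. ftrl A alpha eta ell k b * ell k b))
               - (\<Sum>k=1..n. wgt alpha k n * ell k a)) ` {1..A})"

end

theory Submission imports Defs "HOL-Analysis.Convex" begin

text \<open>With the potential \<open>\<Phi>\<^sub>\<eta>(L) = -(1/\<eta>) log((1/A) \<Sum>\<^sub>a exp(-\<eta> L(a)))\<close>, concave in \<open>L\<close> with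
  gradient the Gibbs distribution, the auxiliary iterate satisfies
  \<open>\<alpha>\<^sub>k \<langle>\<pi>\<^sup>-\<^sub>k\<^sub>+\<^sub>1, \<ell>\<^sub>k\<rangle> \<le> \<Phi>\<^sub>\<eta>(L\<^sub>k) - \<Phi>\<^sub>\<eta>((1 - \<alpha>\<^sub>k) L\<^sub>k\<^sub>-\<^sub>1)\<close> for \<open>\<eta> = etahat\<^sub>k\<close>.
  Homogeneity \<open>\<Phi>\<^sub>\<eta>(cL) = c \<Phi>\<^sub>c\<^sub>\<eta>(L)\<close> rewrites the second term as \<open>(1 - \<alpha>\<^sub>k) \<Phi>\<^sub>\<eta>\<^sub>k(L\<^sub>k\<^sub>-\<^sub>1)\<close>,
  and as \<open>\<Phi>\<^sub>\<eta>\<close> decreases in \<open>\<eta>\<close> and \<open>\<eta>\<^sub>k\<^sub>+\<^sub>1 \<le> etahat\<^sub>k\<close>, the first is at most \<open>\<Phi>\<^sub>\<eta>\<^sub>k\<^sub>+\<^sub>1(L\<^sub>k)\<close>.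
  These increments telescope under the weights \<open>\<alpha>\<^sub>k\<^sup>n\<close> to \<open>\<Phi>\<^sub>\<eta>\<^sub>n\<^sub>+\<^sub>1(L\<^sub>n)\<close>, which is at most
  \<open>min\<^sub>a L\<^sub>n(a) + log A / \<eta>\<^sub>n\<^sub>+\<^sub>1\<close>.\<close>

definition softmin :: "nat \<Rightarrow> real \<Rightarrow> (nat \<Rightarrow> real) \<Rightarrow> real" where
  "softmin A eta L = - ln ((\<Sum>a=1..A. exp (- eta * L a)) / real A) / eta"

lemma sum_exp_pos: "(A::nat) \<ge> 1 \<Longrightarrow> (\<Sum>a=1..A. exp (x a :: real)) > 0"
  by (intro sum_pos) auto

lemma sum_softmax: "A \<ge> 1 \<Longrightarrow> (\<Sum>a=1..A. softmax A eta L a) = 1"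
  using sum_exp_pos[of A "\<lambda>a. - eta * L a"] by (simp add: softmax_def flip: sum_divide_distrib)

lemma softmax_nonneg: "softmax A eta L a \<ge> 0"
  by (simp add: softmax_def sum_nonneg)

lemma softmin_zero: "softmin A eta (\<lambda>a. 0) = 0"
  by (simp add: softmin_def)

lemma softmin_scale:
  assumes "c \<noteq> 0"
  shows "softmin A eta (\<lambda>a. c * L a) = c * softmin A (c * eta) L"
  using assms by (simp add: softmin_def ac_simps)

lemma softmin_le:
  assumes A: "A \<ge> 1" and eta: "eta > 0" and a: "a \<in> {1..A}"
  shows "softmin A eta L \<le> L a + ln (real A) / eta"
proof -
  let ?S = "\<Sum>a=1..A. exp (- eta * L a)"
  have S: "?S > 0" using sum_exp_pos[OF A] .
  have "exp (- eta * L a) \<le> ?S"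
    using a by (intro member_le_sum) auto
  hence "- eta * L a \<le> ln ?S" using S by (simp add: ln_ge_iff)
  hence "- ln ?S / eta \<le> L a" using eta by (simp add: field_simps)
  thus ?thesis using S A eta by (simp add: softmin_def ln_div diff_divide_distrib)
qed

text \<open>Gibbs' variational inequality, i.e.\ concavity of \<open>softmin A \<eta>\<close> with gradient \<open>softmax A \<eta>\<close>.\<close>
lemma softmax_inner_le_softmin_diff:
  assumes A: "A \<ge> 1" and eta: "eta > 0"
  shows "(\<Sum>a=1..A. softmax A eta L a * (L a - M a)) \<le> softmin A eta L - softmin A eta M"
proof -
  let ?p = "softmax A eta L"
  define SL SM where "SL = (\<Sum>a=1..A. exp (- eta * L a))" and "SM = (\<Sum>a=1..A. exp (- eta * M a))"
  have S: "SL > 0" "SM > 0" unfolding SL_def SM_def using sum_exp_pos[OF A] by auto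
  have "exp (\<Sum>a=1..A. ?p a * (eta * (L a - M a))) \<le> (\<Sum>a=1..A. ?p a * exp (eta * (L a - M a)))"
    using convex_on_sum[OF _ _ exp_convex sum_softmax[OF A], where y = "\<lambda>a. eta * (L a - M a)"] A
    by (simp add: softmax_nonneg)
  also have "\<dots> = SM / SL"
    unfolding SL_def SM_def softmax_def sum_divide_distrib
    by (intro sum.cong refl) (simp add: algebra_simps flip: exp_add)
  finally have "(\<Sum>a=1..A. ?p a * (eta * (L a - M a))) \<le> ln (SM / SL)"
    using S by (simp add: ln_ge_iff)
  also have "\<dots> = ln SM - ln SL" using S by (simp add: ln_div)
  finally have "eta * (\<Sum>a=1..A. ?p a * (L a - M a)) \<le> ln SM - ln SL"
    by (simp add: sum_distrib_left algebra_simps)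
  hence "(\<Sum>a=1..A. ?p a * (L a - M a)) \<le> (ln SM - ln SL) / eta"
    using eta by (simp add: le_divide_eq mult.commute)
  also have "\<dots> = softmin A eta L - softmin A eta M"
    using S A eta by (simp add: softmin_def SL_def SM_def ln_div diff_divide_distrib)
  finally show ?thesis .
qed

text \<open>Jensen for \<open>x \<mapsto> x powr (t/s)\<close>: power means of \<open>exp (- L a)\<close> increase with the exponent.\<close>
lemma softmin_antimono:
  assumes A: "A \<ge> 1" and st: "0 < s" "s \<le> t"
  shows "softmin A t L \<le> softmin A s L"
proof -
  define z where "z a = exp (- s * L a)" for a
  define Ss St where "Ss = (\<Sum>a=1..A. exp (- s * L a))" and "St = (\<Sum>a=1..A. exp (- t * L a))"
  have S: "Ss > 0" "St > 0" unfolding Ss_def St_def using sum_exp_pos[OF A] by auto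
  have p: "t / s \<ge> 1" using st by simp
  have "(\<Sum>a=1..A. (1 / real A) * z a) powr (t / s) \<le> (\<Sum>a=1..A. (1 / real A) * z a powr (t / s))"
    using convex_on_sum[OF _ _ powr_convex[OF p], of "{1..A}" "\<lambda>a. 1 / real A" z] A
    by (simp add: z_def)
  also have "\<dots> = St / real A"
    using st by (simp add: z_def St_def powr_def sum_divide_distrib)
  finally have "(Ss / real A) powr (t / s) \<le> St / real A"
    by (simp add: z_def Ss_def sum_divide_distrib)
  hence "ln ((Ss / real A) powr (t / s)) \<le> ln (St / real A)"
    using S A by (intro ln_mono) auto
  hence "t / s * ln (Ss / real A) \<le> ln (St / real A)"
    using S A by (simp add: ln_powr)
  hence "ln (Ss / real A) / s \<le> ln (St / real A) / t"
    using st by (simp add: field_simps)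
  thus ?thesis by (simp add: softmin_def Ss_def St_def)
qed

lemma sum_wgt_Suc:
  "(\<Sum>i=1..Suc m. wgt alpha i (Suc m) * x i)
     = (1 - alpha (Suc m)) * (\<Sum>i=1..m. wgt alpha i m * x i) + alpha (Suc m) * x (Suc m)"
proof -
  have "wgt alpha i (Suc m) = (1 - alpha (Suc m)) * wgt alpha i m" if "i \<in> {1..m}" for i
    using that by (simp add: wgt_def prod.cl_ivl_Suc)
  hence "(\<Sum>i=1..m. wgt alpha i (Suc m) * x i) = (1 - alpha (Suc m)) * (\<Sum>i=1..m. wgt alpha i m * x i)"
    by (simp add: sum_distrib_left mult.assoc)
  thus ?thesis by (simp add: sum.cl_ivl_Suc wgt_def)
qed

lemma cumL_0: "cumL alpha ell 0 = (\<lambda>a. 0)"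
  by (simp add: cumL_def fun_eq_iff)

lemma cumL_Suc: "cumL alpha ell (Suc m) a = (1 - alpha (Suc m)) * cumL alpha ell m a + alpha (Suc m) * ell (Suc m) a"
  unfolding cumL_def by (rule sum_wgt_Suc)

lemma sum_wgt_le_of_step:
  fixes P x :: "nat \<Rightarrow> real"
  assumes "\<And>k. 1 \<le> k \<Longrightarrow> k \<le> n \<Longrightarrow> alpha k \<le> 1"
    and "\<And>k. 1 \<le> k \<Longrightarrow> k \<le> n \<Longrightarrow> alpha k * x k \<le> P k - (1 - alpha k) * P (k - 1)"
    and "P 0 = 0"
  shows "(\<Sum>k=1..n. wgt alpha k n * x k) \<le> P n"
  using assms
proof (induction n)
  case 0
  thus ?case by simp
next
  case (Suc m)
  have "(\<Sum>k=1..m. wgt alpha k m * x k) \<le> P m"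
    using Suc by simp
  hence "(1 - alpha (Suc m)) * (\<Sum>k=1..m. wgt alpha k m * x k) \<le> (1 - alpha (Suc m)) * P m"
    using Suc.prems(1)[of "Suc m"] by (intro mult_left_mono) auto
  thus ?case
    using Suc.prems(2)[of "Suc m"] unfolding sum_wgt_Suc by simp
qed

lemma pim_loss_le_softmin_increment:
  assumes A: "A \<ge> 1" and k: "k \<ge> 1"
    and eta: "0 < eta (k+1)" "eta (k+1) \<le> etahat alpha eta k"
    and alpha: "k \<ge> 2 \<Longrightarrow> alpha k < 1"
  shows "alpha k * (\<Sum>a=1..A. pim A alpha eta ell k a * ell k a)
    \<le> softmin A (eta (k+1)) (cumL alpha ell k) - (1 - alpha k) * softmin A (eta k) (cumL alpha ell (k - 1))"
proof -
  obtain m where m: "k = Suc m" using k by (cases k) auto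
  define e where "e = etahat alpha eta k"
  define M where "M a = (1 - alpha k) * cumL alpha ell m a" for a
  have e: "e > 0" using eta by (simp add: e_def)
  have "alpha k * (\<Sum>a=1..A. pim A alpha eta ell k a * ell k a)
      = (\<Sum>a=1..A. softmax A e (cumL alpha ell k) a * (cumL alpha ell k a - M a))"
    unfolding sum_distrib_left by (intro sum.cong refl) (simp add: pim_def e_def M_def m cumL_Suc)
  also have "\<dots> \<le> softmin A e (cumL alpha ell k) - softmin A e M"
    by (rule softmax_inner_le_softmin_diff[OF A e])
  also have "softmin A e (cumL alpha ell k) \<le> softmin A (eta (k+1)) (cumL alpha ell k)"
    using eta by (intro softmin_antimono[OF A]) (auto simp: e_def)
  also have "softmin A e M = (1 - alpha k) * softmin A (eta k) (cumL alpha ell (k - 1))"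
  proof (cases "m = 0")
    case True
    hence "M = (\<lambda>a. 0)" by (simp add: M_def cumL_0 fun_eq_iff)
    thus ?thesis by (simp add: softmin_zero m True cumL_0)
  next
    case False
    hence "0 < 1 - alpha k" using alpha m by simp
    moreover have "(1 - alpha k) * e = eta k"
      using False calculation by (simp add: e_def etahat_def m)
    ultimately show ?thesis
      unfolding M_def by (simp add: softmin_scale m)
  qed
  finally show ?thesis by simp
qed

lemma regret_le:
  assumes "A \<ge> 1" and "\<And>a. a \<in> {1..A} \<Longrightarrow> C \<le> cumL alpha ell n a"
  shows "regret A alpha eta ell n
    \<le> (\<Sum>k=1..n. wgt alpha k n * (\<Sum>b=1..A. ftrl A alpha eta ell k b * ell k b)) - C"
  unfolding regret_def using assms by (subst Max_le_iff) (auto simp: cumL_def)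

theorem mainTheorem3:
  fixes A :: nat and alpha eta :: "nat \<Rightarrow> real" and ell :: "nat \<Rightarrow> nat \<Rightarrow> real" and n :: nat
  assumes hA: "A \<ge> 1"
    and hloss: "\<And>k a. k \<ge> 1 \<Longrightarrow> a \<in> {1..A} \<Longrightarrow> ell k a \<ge> 0"
    and ha1: "0 < alpha 1" "alpha 1 \<le> 1"
    and heta1: "eta 1 = eta 2 * (1 - alpha 1)"
    and hak: "\<And>k. k \<ge> 2 \<Longrightarrow> 0 < alpha k \<and> alpha k < 1"
    and hetak: "\<And>k. k \<ge> 2 \<Longrightarrow> 0 < eta (k+1) * (1 - alpha k) \<and> eta (k+1) * (1 - alpha k) \<le> eta k"
    and hn: "n \<ge> 1"
  shows "regret A alpha eta ell n
    \<le> (\<Sum>k=1..n. wgt alpha k n *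
          (\<Sum>a=1..A. (ftrl A alpha eta ell k a - pim A alpha eta ell k a) * ell k a))
       + ln (real A) / eta (n+1)"
proof -
  have eta_pos: "0 < eta (k+1)" if "k \<ge> 1" for k
    using hetak[of "k+1"] that by auto
  have eta_le: "eta (k+1) \<le> etahat alpha eta k" if "k \<ge> 1" for k
    using hetak[of k] hak[of k] that by (cases "k = 1") (auto simp: etahat_def le_divide_eq numeral_2_eq_2)
  define Psi where "Psi k = softmin A (eta (k+1)) (cumL alpha ell k)" for k
  have "(\<Sum>k=1..n. wgt alpha k n * (\<Sum>a=1..A. pim A alpha eta ell k a * ell k a)) \<le> Psi n"
  proof (rule sum_wgt_le_of_step)
    show "alpha k \<le> 1" if "1 \<le> k" for k
      using ha1 hak[of k] that by (cases "k = 1") auto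
    show "alpha k * (\<Sum>a=1..A. pim A alpha eta ell k a * ell k a) \<le> Psi k - (1 - alpha k) * Psi (k - 1)"
      if "1 \<le> k" for k
      using pim_loss_le_softmin_increment[OF hA that eta_pos[OF that] eta_le[OF that]] hak[of k] that
      by (simp add: Psi_def)
  qed (simp add: Psi_def cumL_0 softmin_zero)
  moreover have "Psi n \<le> cumL alpha ell n a + ln (real A) / eta (n+1)" if "a \<in> {1..A}" for a
    unfolding Psi_def using softmin_le[OF hA eta_pos[OF hn] that] .
  ultimately have "regret A alpha eta ell n
      \<le> (\<Sum>k=1..n. wgt alpha k n * (\<Sum>b=1..A. ftrl A alpha eta ell k b * ell k b))
        - ((\<Sum>k=1..n. wgt alpha k n * (\<Sum>a=1..A. pim A alpha eta ell k a * ell k a)) - ln (real A) / eta (n+1))"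
    by (intro regret_le[OF hA]) fastforce
  thus ?thesis
    by (simp add: left_diff_distrib right_diff_distrib sum_subtractf)
qed

end
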